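(* Let $d\ge1$, $\mathcal{C}$ the middle-thirds Cantor set, $\mathcal{K}=\mathcal{C}^d$, $s=\dim_H\mathcal{K}$, and $\mu$ the restriction to $\mathcal{K}$ of the $s$-dimensional Hausdorff measure. Then $\alpha_1(\mu)\le\frac{\log2}{\log3}$.
   Context: $\alpha_1(\mu)=\liminf_{\varepsilon\to0}\frac{\log\sup_{\mathcal{L}}\mu(\mathcal{L}^{(\varepsilon)})}{\log\varepsilon}$, the supremum over affine hyperplanes $\mathcal{L}$ of $\mathbb{R}^d$ and $\mathcal{L}^{(\varepsilon)}$ the open Euclidean $\varepsilon$-neighborhood of $\mathcal{L}$. *)

theory Defs
  imports "HOL-Analysis.Analysis"
begin

fun cantor_stage :: "nat \<Rightarrow> real set" where
  "cantor_stage 0 = {0..1}"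
| "cantor_stage (Suc k) = (\<lambda>x. x / 3) ` cantor_stage k \<union> (\<lambda>x. 2/3 + x / 3) ` cantor_stage k"

definition cantor_set :: "real set" where
  "cantor_set = (\<Inter>k. cantor_stage k)"

text \<open>The product set C^d inside real^'n (d = CARD('n)).\<close>
definition cantor_power :: "(real ^ 'n) set" where
  "cantor_power = {x. \<forall>i. x $ i \<in> cantor_set}"

definition hd_term :: "real \<Rightarrow> 'a::metric_space set \<Rightarrow> ennreal" where
  "hd_term s U = (if U = {} then 0 else if s = 0 then 1 else ennreal (diameter U powr s))"

definition hausdorff_pre :: "real \<Rightarrow> real \<Rightarrow> 'a::metric_space set \<Rightarrow> ennreal" where
  "hausdorff_pre s \<delta> A =
     (INF U \<in> {U :: nat \<Rightarrow> 'a set. A \<subseteq> (\<Union>i. U i) \<and> (\<forall>i. diameter (U i) \<le> \<delta>)}.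
        \<Sum>i. hd_term s (U i))"

text \<open>s-dimensional Hausdorff (outer) measure (unnormalised).\<close>
definition hausdorff_measure :: "real \<Rightarrow> 'a::metric_space set \<Rightarrow> ennreal" where
  "hausdorff_measure s A = (SUP \<delta> \<in> {0<..}. hausdorff_pre s \<delta> A)"

definition hausdorff_dim :: "'a::metric_space set \<Rightarrow> real" where
  "hausdorff_dim A = Inf {t. t \<ge> 0 \<and> hausdorff_measure t A = 0}"

definition affine_hyperplanes :: "(real ^ 'n) set set" where
  "affine_hyperplanes = {{x. a \<bullet> x = b} | a b. a \<noteq> 0}"

definition open_nbhd :: "'a::metric_space set \<Rightarrow> real \<Rightarrow> 'a set" where
  "open_nbhd L \<epsilon> = {x. \<exists>y\<in>L. dist x y < \<epsilon>}"

definition alpha1 :: "((real ^ 'n) set \<Rightarrow> real) \<Rightarrow> ereal" where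
  "alpha1 \<mu> = Liminf (at_right 0)
      (\<lambda>\<epsilon>. ereal (ln (Sup ((\<lambda>L. \<mu> (open_nbhd L \<epsilon>)) ` affine_hyperplanes)) / ln \<epsilon>))"

end

theory Submission
  imports Defs
begin

(*
  With 3^-(m+1) <= eps < 3^-m, the eps-neighbourhood of the coordinate hyperplane
  {x. x$i = 0} contains the strip of K = C^d on which x$i <= 3^-(m+2). It therefore
  suffices that this strip has H^s-mass at least c 2^-m = c (3^-m)^(log 2 / log 3).

  This is the mass distribution principle in counting form. Among the 2^(dN) level-N
  grid points of K, a set of diameter below 3^-j contains at most 2^(d(N-j)) of them,
  a share (3^-j)^s with s = d log 2 / log 3, whereas the strip x$i <= 3^-k contains a
  share 2^-k; by compactness an arbitrary cover of the strip can be replaced by finitely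
  many such sets. Covering K by its 2^(dN) level-N cubes gives H^s(K) < oo and
  H^t(K) = 0 for t > s, which identifies s and makes mu a bounded monotone set function.
*)

section \<open>The Cantor set and its construction intervals\<close>

(* m \<in> cantor_index k iff [m/3^k, (m+1)/3^k] is one of the 2^k intervals of
   cantor_stage k, i.e. iff m < 3^k has only the ternary digits 0 and 2. *)
fun cantor_index :: "nat \<Rightarrow> nat set" where
  "cantor_index 0 = {0}"
| "cantor_index (Suc k) = cantor_index k \<union> (\<lambda>m. 2 * 3^k + m) ` cantor_index k"

lemma finite_cantor_index: "finite (cantor_index k)"
  by (induction k) auto

lemma cantor_index_less: "m \<in> cantor_index k \<Longrightarrow> m < 3^k"
  by (induction k arbitrary: m) force+

lemma card_cantor_index: "card (cantor_index k) = 2^k"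
proof (induction k)
  case (Suc k)
  have "cantor_index k \<inter> (\<lambda>m. 2 * 3^k + m) ` cantor_index k = {}"
    using cantor_index_less by fastforce
  then show ?case
    using Suc by (simp add: card_Un_disjoint finite_cantor_index card_image)
qed simp

lemma cantor_index_mono: "j \<le> k \<Longrightarrow> cantor_index j \<subseteq> cantor_index k"
  by (rule lift_Suc_mono_le[of cantor_index]) auto

lemma three_times_mem_cantor_index: "m \<in> cantor_index k \<Longrightarrow> 3 * m \<in> cantor_index (Suc k)"
proof (induction k arbitrary: m)
  case (Suc k)
  from Suc.prems consider "m \<in> cantor_index k"
    | m' where "m' \<in> cantor_index k" "m = 2 * 3^k + m'" by auto
  then show ?case
  proof cases
    case 1
    then show ?thesis using Suc.IH by simp
  next
    case 2
    have "3 * m = 2 * 3^Suc k + 3 * m'" using 2(2) by simp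
    with Suc.IH[OF 2(1)] show ?thesis
      unfolding cantor_index.simps(2)[of "Suc k"] by blast
  qed
qed simp

lemma mult_pow3_mem_cantor_index: "m \<in> cantor_index k \<Longrightarrow> m * 3^j \<in> cantor_index (k + j)"
proof (induction j)
  case (Suc j)
  from three_times_mem_cantor_index[OF Suc.IH[OF Suc.prems]] show ?case
    by (simp add: ac_simps del: cantor_index.simps)
qed simp

lemma card_cantor_index_window_le:
  assumes "S \<subseteq> (+) c ` cantor_index N" and "\<And>a b. a \<in> S \<Longrightarrow> b \<in> S \<Longrightarrow> a < b + 3^j"
  shows "card S \<le> 2^j"
  using assms
proof (induction N arbitrary: c S)
  case 0
  then have "card S \<le> card {c}" by (intro card_mono) auto
  then show ?case by (simp add: le_trans[OF _ one_le_power])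
next
  case (Suc N)
  let ?lo = "(+) c ` cantor_index N" and ?hi = "(+) (c + 2 * 3^N) ` cantor_index N"
  have S: "S \<subseteq> ?lo \<union> ?hi"
    using Suc.prems(1) by (simp add: image_Un image_image add.assoc)
  show ?case
  proof (cases "j \<le> N")
    case False
    have "card S \<le> card ((+) c ` cantor_index (Suc N))"
      using Suc.prems(1) by (intro card_mono finite_imageI finite_cantor_index)
    also have "\<dots> \<le> 2^Suc N"
      using card_image_le[OF finite_cantor_index] by (simp only: card_cantor_index)
    also have "\<dots> \<le> 2^j" using False by (intro power_increasing) auto
    finally show ?thesis .
  next
    case True
    have "S \<subseteq> ?lo \<or> S \<subseteq> ?hi"
    proof (rule ccontr)
      assume "\<not> ?thesis"
      then obtain a b where "a \<in> S" "a \<notin> ?lo" "b \<in> S" "b \<notin> ?hi" by blast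
      with S have "a \<in> ?hi" "b \<in> ?lo" by blast+
      then have "c + 2 * 3^N \<le> a" "b < c + 3^N" using cantor_index_less by auto
      moreover have "a < b + 3^j" using Suc.prems(2) \<open>a \<in> S\<close> \<open>b \<in> S\<close> by blast
      moreover have "(3::nat)^j \<le> 3^N" using True by (intro power_increasing) auto
      ultimately show False by linarith
    qed
    then show ?thesis using Suc.IH Suc.prems(2) by blast
  qed
qed

definition cantor_interval :: "nat \<Rightarrow> nat \<Rightarrow> real set" where
  "cantor_interval k m = {real m / 3^k .. (real m + 1) / 3^k}"

lemma cantor_stage_eq_Union: "cantor_stage k = (\<Union>m\<in>cantor_index k. cantor_interval k m)"
proof (induction k)
  case (Suc k)
  have left: "(\<lambda>x. x / 3) ` cantor_interval k m = cantor_interval (Suc k) m" for m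
    by (simp add: cantor_interval_def)
  have right: "(\<lambda>x. 2/3 + x / 3) ` cantor_interval k m = cantor_interval (Suc k) (2 * 3^k + m)" for m
  proof -
    have affine: "(\<lambda>x. 2/3 + x / 3) = (\<lambda>x. (1/3) * x + 2/3 :: real)"
      by (simp add: fun_eq_iff)
    show ?thesis
      unfolding affine cantor_interval_def image_affinity_atLeastAtMost
      by (simp add: divide_right_mono) (simp add: field_simps)
  qed
  show ?case
    by (simp add: Suc image_UN left right)
qed (simp add: cantor_interval_def)

lemma cantor_stage_Suc_subset: "cantor_stage (Suc k) \<subseteq> cantor_stage k"
proof (induction k)
  case (Suc k)
  then show ?case
    using image_mono[OF Suc, of "\<lambda>x. x / 3"] image_mono[OF Suc, of "\<lambda>x. 2/3 + x / 3"]
    by (simp only: cantor_stage.simps) blast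
qed auto

lemma cantor_stage_antimono: "j \<le> k \<Longrightarrow> cantor_stage k \<subseteq> cantor_stage j"
  by (rule lift_Suc_antimono_le[of cantor_stage, OF cantor_stage_Suc_subset])

lemma cantor_endpoint_mem_cantor_set:
  assumes "m \<in> cantor_index k"
  shows "real m / 3^k \<in> cantor_set"
  unfolding cantor_set_def
proof
  fix j
  have "m * 3^j \<in> cantor_index (k + j)"
    using assms by (rule mult_pow3_mem_cantor_index)
  then have "real (m * 3^j) / 3^(k + j) \<in> cantor_stage (k + j)"
    unfolding cantor_stage_eq_Union cantor_interval_def
    by (rule UN_I) (auto intro: divide_right_mono)
  moreover have "real (m * 3^j) / 3^(k + j) = real m / 3^k"
    by (simp add: power_add)
  ultimately show "real m / 3^k \<in> cantor_stage j"
    using cantor_stage_antimono[of j "k + j"] by auto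
qed

lemma zero_mem_cantor_set: "0 \<in> cantor_set"
  using cantor_endpoint_mem_cantor_set[of 0 0] by simp

lemma cantor_set_subset_01: "cantor_set \<subseteq> {0..1}"
  unfolding cantor_set_def using INT_lower[of 0 UNIV cantor_stage] by simp

lemma closed_cantor_set: "closed cantor_set"
  unfolding cantor_set_def cantor_stage_eq_Union cantor_interval_def
  by (intro closed_INT closed_UN) (auto simp: finite_cantor_index)

lemma cantor_set_mem_interval: "x \<in> cantor_set \<Longrightarrow> \<exists>m\<in>cantor_index k. x \<in> cantor_interval k m"
  unfolding cantor_set_def using cantor_stage_eq_Union by blast

section \<open>Grid points of the Cantor dust\<close>

definition cantor_grid :: "nat \<Rightarrow> ('n::finite \<Rightarrow> nat) set" where
  "cantor_grid N = PiE UNIV (\<lambda>_. cantor_index N)"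

definition grid_point :: "nat \<Rightarrow> ('n::finite \<Rightarrow> nat) \<Rightarrow> real^'n" where
  "grid_point N w = (\<chi> i. real (w i) / 3^N)"

definition cantor_strip :: "nat \<Rightarrow> 'n::finite \<Rightarrow> (real^'n) set" where
  "cantor_strip k i = {x \<in> cantor_power. x $ i \<le> 1 / 3^k}"

lemma mem_cantor_grid: "w \<in> cantor_grid N \<longleftrightarrow> (\<forall>i. w i \<in> cantor_index N)"
  by (simp add: cantor_grid_def PiE_UNIV_domain Pi_iff)

lemma finite_cantor_grid: "finite (cantor_grid N)"
  by (simp add: cantor_grid_def finite_PiE finite_cantor_index)

lemma card_cantor_grid: "card (cantor_grid N :: ('n::finite \<Rightarrow> nat) set) = 2^(CARD('n) * N)"
  by (simp add: cantor_grid_def card_PiE card_cantor_index mult.commute power_mult)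

lemma grid_point_mem_cantor_power: "w \<in> cantor_grid N \<Longrightarrow> grid_point N w \<in> cantor_power"
  by (simp add: mem_cantor_grid grid_point_def cantor_power_def cantor_endpoint_mem_cantor_set)

lemma zero_mem_cantor_strip: "0 \<in> cantor_strip k i"
  by (simp add: cantor_strip_def cantor_power_def zero_mem_cantor_set)

lemma cantor_strip_subset: "cantor_strip k i \<subseteq> cantor_power"
  by (auto simp: cantor_strip_def)

lemma cantor_strip_0: "cantor_strip 0 i = cantor_power"
  using cantor_set_subset_01 by (auto simp: cantor_strip_def cantor_power_def)

lemma card_grid_points_in_small_set:
  fixes V :: "(real^'n::finite) set"
  assumes small: "\<And>x y. x \<in> V \<Longrightarrow> y \<in> V \<Longrightarrow> dist x y < 1 / 3^k" and "k \<le> N"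
  shows "card {w \<in> cantor_grid N. grid_point N w \<in> V} \<le> 2^(CARD('n) * (N - k))"
proof -
  define T where "T = {w \<in> cantor_grid N. grid_point N w \<in> V}"
  have "finite T"
    by (rule finite_subset[OF _ finite_cantor_grid]) (auto simp: T_def)
  have spread: "w j < v j + 3^(N - k)" if "w \<in> T" "v \<in> T" for w v j
  proof -
    have "dist (grid_point N w) (grid_point N v) < 1 / 3^k"
      using small that by (auto simp: T_def)
    then have "\<bar>grid_point N w $ j - grid_point N v $ j\<bar> < 1 / 3^k"
      by (metis component_le_norm_cart dist_norm le_less_trans vector_minus_component)
    then have "real (w j) / 3^N - real (v j) / 3^N < 1 / 3^k"
      by (simp add: grid_point_def abs_less_iff)
    then have "real (w j) < real (v j) + 3^N / 3^k"
      by (simp add: field_simps)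
    also have "(3::real)^N / 3^k = 3^(N - k)"
      using \<open>k \<le> N\<close> by (simp add: power_diff)
    finally show ?thesis
      by (subst of_nat_less_iff[where 'a=real, symmetric]) simp
  qed
  have coordinate: "card ((\<lambda>w. w j) ` T) \<le> 2^(N - k)" for j
  proof (rule card_cantor_index_window_le)
    show "(\<lambda>w. w j) ` T \<subseteq> (+) 0 ` cantor_index N"
      by (auto simp: T_def mem_cantor_grid)
  qed (use spread in auto)
  have "card T \<le> card (PiE UNIV (\<lambda>j. (\<lambda>w. w j) ` T))"
    using \<open>finite T\<close> by (intro card_mono finite_PiE) (auto simp: PiE_UNIV_domain)
  also have "\<dots> = (\<Prod>j\<in>UNIV. card ((\<lambda>w. w j) ` T))"
    by (simp add: card_PiE)
  also have "\<dots> \<le> (\<Prod>j\<in>(UNIV::'n set). 2^(N - k))"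
    by (rule prod_mono) (simp add: coordinate)
  also have "\<dots> = 2^(CARD('n) * (N - k))"
    by (simp add: mult.commute flip: power_mult)
  finally show ?thesis unfolding T_def .
qed

lemma grid_point_mem_cantor_strip:
  assumes "w \<in> cantor_grid N" "w i < 3^(N - k)" "k \<le> N"
  shows "grid_point N w \<in> cantor_strip k i"
proof -
  have "real (w i) \<le> 3^(N - k)"
    using assms(2) by simp
  also have "(3::real)^(N - k) = 3^N / 3^k"
    using assms(3) by (simp add: power_diff)
  finally have "grid_point N w $ i \<le> 1 / 3^k"
    by (simp add: grid_point_def field_simps)
  with assms(1) show ?thesis
    using grid_point_mem_cantor_power by (simp add: cantor_strip_def)
qed

lemma card_grid_points_in_strip:
  fixes i :: "'n::finite"
  assumes "k \<le> N"
  shows "2^(CARD('n) * N) \<le> 2^k * card {w \<in> cantor_grid N. grid_point N w \<in> cantor_strip k i}"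
proof -
  define A where "A j = (if j = i then cantor_index (N - k) else cantor_index N)" for j
  have "PiE UNIV A \<subseteq> {w \<in> cantor_grid N. grid_point N w \<in> cantor_strip k i}"
  proof
    fix w assume w: "w \<in> PiE UNIV A"
    then have "w \<in> cantor_grid N"
      using cantor_index_mono[of "N - k" N]
      by (auto simp: A_def mem_cantor_grid PiE_UNIV_domain Pi_iff split: if_splits)
    moreover have "w i \<in> A i"
      using w by (simp add: PiE_UNIV_domain Pi_iff)
    ultimately show "w \<in> {w \<in> cantor_grid N. grid_point N w \<in> cantor_strip k i}"
      using assms by (simp add: A_def cantor_index_less grid_point_mem_cantor_strip)
  qed
  then have "card (PiE UNIV A) \<le> card {w \<in> cantor_grid N. grid_point N w \<in> cantor_strip k i}"
    by (intro card_mono finite_subset[OF _ finite_cantor_grid[of N]]) auto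
  moreover have "2^k * card (PiE UNIV A) = 2^(CARD('n) * N)"
  proof -
    have "(\<Prod>j\<in>UNIV - {i}. card (A j)) = (\<Prod>j\<in>UNIV - {i}. 2^N)"
      by (rule prod.cong) (auto simp: A_def card_cantor_index)
    then have "card (PiE UNIV A) = card (A i) * (\<Prod>j\<in>UNIV - {i}. 2^N)"
      by (simp add: card_PiE prod.remove[of UNIV i])
    then have "card (PiE UNIV A) = 2^(N - k) * 2^(N * (CARD('n) - 1))"
      by (simp add: A_def card_cantor_index card_Diff_singleton power_mult)
    moreover obtain d where "CARD('n) = Suc d"
      using zero_less_card_finite not0_implies_Suc by blast
    moreover have "k + (N - k) = N" using assms by simp
    ultimately show ?thesis
      by (simp add: algebra_simps flip: power_add)
  qed
  ultimately show ?thesis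
    by (metis mult_le_mono2)
qed

lemma compact_cantor_power: "compact (cantor_power :: (real^'n::finite) set)"
proof -
  have "closed ((\<lambda>x::real^'n. x $ i) -` cantor_set)" for i
    by (intro continuous_closed_vimage closed_cantor_set) (auto intro: continuous_intros)
  then have "closed (cantor_power :: (real^'n) set)"
    unfolding cantor_power_def by (simp add: Collect_all_eq closed_INT vimage_def)
  moreover have "(cantor_power :: (real^'n) set) \<subseteq> cbox 0 1"
    using cantor_set_subset_01 by (auto simp: cantor_power_def mem_box_cart subset_iff)
  ultimately show ?thesis
    using bounded_cbox bounded_subset compact_eq_bounded_closed by blast
qed

lemma compact_cantor_strip:
  fixes i :: "'n::finite"
  shows "compact (cantor_strip k i)"
proof -
  have "cantor_strip k i = cantor_power \<inter> (\<lambda>x. x $ i) -` {..1 / 3^k}"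
    by (auto simp: cantor_strip_def)
  moreover have "closed ((\<lambda>x::real^'n. x $ i) -` {..1 / 3^k})"
    by (intro continuous_closed_vimage) (auto intro: continuous_intros)
  ultimately show ?thesis
    using compact_cantor_power compact_Int_closed by simp
qed

section \<open>Covers of a strip\<close>

lemma card_grid_points_cover_cantor_strip:
  fixes i :: "'n::finite" and V :: "'a \<Rightarrow> (real^'n) set"
  assumes "finite F" and cover: "cantor_strip k i \<subseteq> (\<Union>j\<in>F. V j)" and "k \<le> N"
    and small: "\<And>j x y. j \<in> F \<Longrightarrow> x \<in> V j \<Longrightarrow> y \<in> V j \<Longrightarrow> dist x y < 1 / 3^(m j)"
    and mN: "\<And>j. j \<in> F \<Longrightarrow> m j \<le> N"
  shows "2^(CARD('n) * N) \<le> 2^k * (\<Sum>j\<in>F. 2^(CARD('n) * (N - m j)) :: nat)"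
proof -
  define T where "T j = {w \<in> cantor_grid N. grid_point N w \<in> V j}" for j
  have "finite (T j)" for j
    by (rule finite_subset[OF _ finite_cantor_grid]) (auto simp: T_def)
  have "card {w \<in> cantor_grid N. grid_point N w \<in> cantor_strip k i} \<le> card (\<Union>j\<in>F. T j)"
    using cover assms(1) \<open>\<And>j. finite (T j)\<close> by (intro card_mono) (auto simp: T_def)
  also have "\<dots> \<le> (\<Sum>j\<in>F. card (T j))"
    by (rule card_UN_le[OF assms(1)])
  also have "\<dots> \<le> (\<Sum>j\<in>F. 2^(CARD('n) * (N - m j)))"
  proof (intro sum_mono)
    fix j assume "j \<in> F"
    show "card (T j) \<le> 2^(CARD('n) * (N - m j))"
      unfolding T_def using small[OF \<open>j \<in> F\<close>] mN[OF \<open>j \<in> F\<close>]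
      by (rule card_grid_points_in_small_set)
  qed
  finally show ?thesis
    using card_grid_points_in_strip[OF \<open>k \<le> N\<close>, of i] by (meson le_trans mult_le_mono2)
qed

lemma cantor_strip_finite_cover_weight:
  fixes i :: "'n::finite" and V :: "'a \<Rightarrow> (real^'n) set"
  assumes "finite F" and cover: "cantor_strip k i \<subseteq> (\<Union>j\<in>F. V j)"
    and small: "\<And>j x y. j \<in> F \<Longrightarrow> x \<in> V j \<Longrightarrow> y \<in> V j \<Longrightarrow> dist x y < 1 / 3^(m j)"
  shows "1 / 2^k \<le> (\<Sum>j\<in>F. 1 / 2^(CARD('n) * m j) :: real)"
proof -
  define d where "d = CARD('n)"
  define N where "N = Max (insert k (m ` F))"
  have "k \<le> N" and mN: "\<And>j. j \<in> F \<Longrightarrow> m j \<le> N"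
    using assms(1) by (auto simp: N_def)
  have "real (2^(d * N)) \<le> real (2^k * (\<Sum>j\<in>F. 2^(d * (N - m j))))"
    unfolding of_nat_le_iff d_def
    by (rule card_grid_points_cover_cantor_strip[OF assms(1) cover \<open>k \<le> N\<close> small mN])
  then have "(2::real)^(d * N) \<le> 2^k * (\<Sum>j\<in>F. 2^(d * (N - m j)))"
    by simp
  also have "(\<Sum>j\<in>F. (2::real)^(d * (N - m j))) = 2^(d * N) * (\<Sum>j\<in>F. 1 / 2^(d * m j))"
    unfolding sum_distrib_left
  proof (rule sum.cong[OF refl])
    fix j assume "j \<in> F"
    then have "d * m j \<le> d * N" using mN by simp
    then show "(2::real)^(d * (N - m j)) = 2^(d * N) * (1 / 2^(d * m j))"
      by (simp add: diff_mult_distrib2 power_diff)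
  qed
  finally have "2^(d * N) * 1 \<le> 2^(d * N) * (2^k * (\<Sum>j\<in>F. 1 / 2^(d * m j) :: real))"
    by (simp only: ac_simps mult_1_right)
  then have "1 \<le> 2^k * (\<Sum>j\<in>F. 1 / 2^(d * m j) :: real)"
    by (rule mult_left_le_imp_le) simp
  then show ?thesis
    by (simp add: d_def divide_le_eq mult.commute)
qed

lemma cantor_strip_open_cover_weight:
  fixes i :: "'n::finite" and V :: "'a \<Rightarrow> (real^'n) set"
  assumes cover: "cantor_strip k i \<subseteq> (\<Union>j\<in>J. V j)" and "\<And>j. j \<in> J \<Longrightarrow> open (V j)"
    and small: "\<And>j x y. j \<in> J \<Longrightarrow> x \<in> V j \<Longrightarrow> y \<in> V j \<Longrightarrow> dist x y < 1 / 3^(m j)"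
  obtains F where "F \<subseteq> J" "finite F" "1 / 2^k \<le> (\<Sum>j\<in>F. 1 / 2^(CARD('n) * m j) :: real)"
proof -
  obtain F where F: "F \<subseteq> J" "finite F" "cantor_strip k i \<subseteq> (\<Union>j\<in>F. V j)"
    using cover assms(2) compactE_image[OF compact_cantor_strip] by metis
  moreover have "1 / 2^k \<le> (\<Sum>j\<in>F. 1 / 2^(CARD('n) * m j) :: real)"
    using F small by (intro cantor_strip_finite_cover_weight[OF F(2,3)]) blast
  ultimately show ?thesis
    using that by blast
qed

definition cantor_exponent :: "nat \<Rightarrow> real" where
  "cantor_exponent d = d * ln 2 / ln 3"

lemma cantor_exponent_pos: "0 < d \<Longrightarrow> 0 < cantor_exponent d"
  by (simp add: cantor_exponent_def)

lemma inverse_pow3_powr_cantor_exponent: "(1 / 3^k) powr cantor_exponent d = 1 / 2^(d * k)"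
proof -
  have "cantor_exponent d * ln (1 / 3^k) = ln (1 / 2^(d * k) :: real)"
    by (simp add: cantor_exponent_def ln_div ln_realpow)
  then show ?thesis
    by (simp add: powr_def)
qed

lemma exists_pow3_bracket:
  fixes r :: real
  assumes "0 < r" "r < 1"
  shows "\<exists>m. 1 / 3^Suc m \<le> r \<and> r < 1 / 3^m"
proof -
  obtain n where "(1/3::real)^n \<le> r"
    using real_arch_pow_inv[OF assms(1), of "1/3"] by (auto intro: less_imp_le)
  from ex_least_nat_le[of "\<lambda>j. (1/3::real)^j \<le> r", OF this]
  obtain l where l: "(1/3::real)^l \<le> r" and least: "\<forall>j<l. \<not> (1/3::real)^j \<le> r"
    by blast
  have "l \<noteq> 0"
    using l assms(2) by (intro notI) simp
  then obtain m where "l = Suc m"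
    using not0_implies_Suc by blast
  with l least have "(1/3::real)^Suc m \<le> r" "r < (1/3)^m"
    by auto
  then show ?thesis
    unfolding power_one_over by blast
qed

lemma exists_level_weight_le:
  fixes r e :: real
  assumes "0 \<le> r" "r < 1" "0 < e" "0 < d"
  shows "\<exists>m. r < 1 / 3^m \<and> 1 / 2^(d * m) \<le> 2^d * (r powr cantor_exponent d + e)"
proof (cases "r = 0")
  case True
  obtain m where "(1/2::real)^m < e"
    using real_arch_pow_inv[OF assms(3), of "1/2"] by auto
  moreover have "(2::real)^m \<le> 2^(d * m)"
    using assms(4) by (intro power_increasing) auto
  then have "1 / 2^(d * m) \<le> (1/2::real)^m"
    unfolding power_one_over by (rule divide_left_mono) auto
  moreover have "e \<le> 2^d * e"
    using assms(3) by simp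
  ultimately have "1 / 2^(d * m) \<le> 2^d * e"
    by linarith
  with True show ?thesis
    by (intro exI[of _ m]) simp
next
  case False
  with assms(1,2) obtain m where m: "1 / 3^Suc m \<le> r" "r < 1 / 3^m"
    using exists_pow3_bracket by (metis order_le_neq_trans)
  have "(1 / 3^Suc m) powr cantor_exponent d \<le> r powr cantor_exponent d"
    using m(1) by (intro powr_mono2) (auto simp: cantor_exponent_def)
  then have "1 / 2^(d * Suc m) \<le> r powr cantor_exponent d"
    by (simp only: inverse_pow3_powr_cantor_exponent)
  have "1 / 2^(d * m) = 2^d * (1 / 2^(d * Suc m) :: real)"
    by (simp add: power_add)
  also have "\<dots> \<le> 2^d * r powr cantor_exponent d"
    using \<open>1 / 2^(d * Suc m) \<le> r powr cantor_exponent d\<close> by (rule mult_left_mono) simp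
  finally have "1 / 2^(d * m) \<le> 2^d * r powr cantor_exponent d" .
  moreover have "(0::real) \<le> 2^d * e"
    using assms(3) by simp
  ultimately show ?thesis
    using m(2) by (intro exI[of _ m]) (simp add: distrib_left)
qed

lemma exists_open_superset_dist_less:
  fixes U :: "'a::metric_space set"
  assumes "bounded U" "diameter U < \<rho>"
  shows "\<exists>V. open V \<and> U \<subseteq> V \<and> (\<forall>x\<in>V. \<forall>y\<in>V. dist x y < \<rho>)"
proof -
  define \<eta> where "\<eta> = (\<rho> - diameter U) / 2"
  have "0 < \<eta>" using assms(2) by (simp add: \<eta>_def)
  show ?thesis
  proof (intro exI conjI ballI)
    show "open (\<Union>u\<in>U. ball u \<eta>)" by blast
    show "U \<subseteq> (\<Union>u\<in>U. ball u \<eta>)" using \<open>0 < \<eta>\<close> by auto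
    fix x y assume "x \<in> (\<Union>u\<in>U. ball u \<eta>)" "y \<in> (\<Union>u\<in>U. ball u \<eta>)"
    then obtain a b where "a \<in> U" "b \<in> U" "dist a x < \<eta>" "dist b y < \<eta>" by auto
    moreover have "dist a b \<le> diameter U"
      using assms(1) \<open>a \<in> U\<close> \<open>b \<in> U\<close> by (rule diameter_bounded_bound)
    moreover have "dist x y \<le> dist a x + dist a b + dist b y"
      using dist_triangle[of x y a] dist_triangle[of a y b] dist_commute[of x a] by linarith
    ultimately show "dist x y < \<rho>" by (simp add: \<eta>_def)
  qed
qed

lemma exists_open_superset_level_weight:
  fixes U :: "'a::metric_space set"
  assumes "bounded U" "diameter U < 1" "0 < e" "0 < d"
  shows "\<exists>m V. open V \<and> U \<subseteq> V \<and> (\<forall>x\<in>V. \<forall>y\<in>V. dist x y < 1 / 3^m)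
    \<and> 1 / 2^(d * m) \<le> 2^d * (diameter U powr cantor_exponent d + e)"
proof -
  obtain m where "diameter U < 1 / 3^m"
    "1 / 2^(d * m) \<le> 2^d * (diameter U powr cantor_exponent d + e)"
    using exists_level_weight_le[OF diameter_ge_0[OF assms(1)] assms(2-4)] by blast
  moreover obtain V where "open V" "U \<subseteq> V" "\<forall>x\<in>V. \<forall>y\<in>V. dist x y < 1 / 3^m"
    using exists_open_superset_dist_less[OF assms(1) \<open>diameter U < 1 / 3^m\<close>] by blast
  ultimately show ?thesis
    by blast
qed

lemma sum_add_half_powers_le:
  fixes g :: "nat \<Rightarrow> real"
  assumes "finite F" "0 \<le> e"
  shows "(\<Sum>j\<in>F. g j + e * (1/2)^Suc j) \<le> (\<Sum>j\<in>F. g j) + e"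
proof -
  have "(\<Sum>j\<in>F. (1/2::real)^Suc j) \<le> (\<Sum>j. (1/2)^Suc j)"
    by (rule sum_le_suminf[OF sums_summable[OF power_half_series] assms(1)]) simp
  also have "(\<Sum>j. (1/2::real)^Suc j) = 1"
    by (rule sums_unique[OF power_half_series, symmetric])
  finally have "(\<Sum>j\<in>F. (1/2::real)^Suc j) \<le> 1" .
  then have "e * (\<Sum>j\<in>F. (1/2::real)^Suc j) \<le> e"
    using assms(2) by (rule mult_left_le)
  then show ?thesis
    by (simp add: sum.distrib sum_distrib_left)
qed

(* The counting form of the mass distribution principle: each U j is enlarged to an open
   set of diameter below 3^-m with 2^-(d m) comparable to (diameter (U j))^s, compactness
   leaves finitely many of them, and their grid points are counted. *)
lemma sum_hd_term_cover_cantor_strip_ge: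
  fixes U :: "nat \<Rightarrow> (real^'n::finite) set" and i :: 'n
  assumes cover: "cantor_strip k i \<subseteq> (\<Union>j. U j)"
    and bounded: "\<And>j. bounded (U j)" and small: "\<And>j. diameter (U j) < 1"
  shows "ennreal (1 / 2^(CARD('n) + k)) \<le> (\<Sum>j. hd_term (cantor_exponent CARD('n)) (U j))"
proof (rule ennreal_le_epsilon)
  fix e :: real assume "0 < e"
  let ?d = "CARD('n)" and ?s = "cantor_exponent CARD('n)"
  define g where "g j = (if U j = {} then 0 else diameter (U j) powr ?s)" for j
  define J where "J = {j. U j \<noteq> {}}"
  have "\<exists>m V. open V \<and> U j \<subseteq> V \<and> (\<forall>x\<in>V. \<forall>y\<in>V. dist x y < 1 / 3^m)
      \<and> 1 / 2^(?d * m) \<le> 2^?d * (g j + e * (1/2)^Suc j)" if "j \<in> J" for j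
    using exists_open_superset_level_weight[OF bounded small, of "e * (1/2)^Suc j" ?d] \<open>0 < e\<close> that
    by (simp add: g_def J_def)
  then obtain m V where V: "\<And>j. j \<in> J \<Longrightarrow> open (V j) \<and> U j \<subseteq> V j
      \<and> (\<forall>x\<in>V j. \<forall>y\<in>V j. dist x y < 1 / 3^m j) \<and> 1 / 2^(?d * m j) \<le> 2^?d * (g j + e * (1/2)^Suc j)"
    by metis
  have "cantor_strip k i \<subseteq> (\<Union>j\<in>J. V j)"
  proof
    fix x assume "x \<in> cantor_strip k i"
    then obtain j where "x \<in> U j" using cover by blast
    then have "j \<in> J" by (auto simp: J_def)
    with \<open>x \<in> U j\<close> V show "x \<in> (\<Union>j\<in>J. V j)" by blast
  qed
  then obtain F where F: "F \<subseteq> J" "finite F" "1 / 2^k \<le> (\<Sum>j\<in>F. 1 / 2^(?d * m j) :: real)"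
    using V by (elim cantor_strip_open_cover_weight) blast+
  note \<open>1 / 2^k \<le> (\<Sum>j\<in>F. 1 / 2^(?d * m j))\<close>
  also have "(\<Sum>j\<in>F. 1 / 2^(?d * m j)) \<le> 2^?d * (\<Sum>j\<in>F. g j + e * (1/2)^Suc j)"
    using F(1) V by (simp add: sum_distrib_left sum_mono subset_iff)
  also have "\<dots> \<le> 2^?d * ((\<Sum>j\<in>F. g j) + e)"
    using F(2) \<open>0 < e\<close> by (intro mult_left_mono sum_add_half_powers_le) auto
  finally have "ennreal (1 / 2^(?d + k)) \<le> ennreal ((\<Sum>j\<in>F. g j) + e)"
    by (intro ennreal_leI) (simp add: power_add field_simps)
  also have "\<dots> = (\<Sum>j\<in>F. ennreal (g j)) + ennreal e"
    using \<open>0 < e\<close> by (simp add: g_def sum_nonneg ennreal_plus sum_ennreal)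
  also have "\<dots> \<le> (\<Sum>j. ennreal (g j)) + ennreal e"
    using F(2) by (intro add_right_mono sum_le_suminf) auto
  also have "(\<Sum>j. ennreal (g j)) = (\<Sum>j. hd_term ?s (U j))"
    using cantor_exponent_pos[of ?d] by (intro suminf_cong) (simp add: hd_term_def g_def)
  finally show "ennreal (1 / 2^(?d + k)) \<le> (\<Sum>j. hd_term ?s (U j)) + ennreal e" .
qed

section \<open>Hausdorff measure of the Cantor dust\<close>

lemma hausdorff_pre_le_sum:
  assumes "A \<subseteq> (\<Union>j. U j)" "\<And>j. diameter (U j) \<le> \<delta>"
  shows "hausdorff_pre t \<delta> A \<le> (\<Sum>j. hd_term t (U j))"
  unfolding hausdorff_pre_def by (rule INF_lower) (use assms in auto)

lemma hausdorff_pre_mono: "A \<subseteq> B \<Longrightarrow> hausdorff_pre t \<delta> A \<le> hausdorff_pre t \<delta> B"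
  unfolding hausdorff_pre_def by (rule INF_superset_mono) auto

lemma hausdorff_measure_mono: "A \<subseteq> B \<Longrightarrow> hausdorff_measure t A \<le> hausdorff_measure t B"
  unfolding hausdorff_measure_def by (rule SUP_mono) (use hausdorff_pre_mono in blast)

lemma hausdorff_pre_le_hausdorff_measure: "0 < \<delta> \<Longrightarrow> hausdorff_pre t \<delta> A \<le> hausdorff_measure t A"
  unfolding hausdorff_measure_def by (rule SUP_upper) auto

lemma diameter_unbounded:
  fixes S :: "'a::metric_space set"
  assumes "S \<noteq> {}" "\<not> bounded S"
  shows "diameter S = Sup (UNIV :: real set)"
proof -
  define X where "X = (\<lambda>(x, y). dist x y) ` (S \<times> S)"
  obtain x where "x \<in> S" using assms(1) by blast
  have "\<not> (\<forall>z\<in>X. z \<le> b)" for b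
  proof
    assume "\<forall>z\<in>X. z \<le> b"
    then have "S \<subseteq> cball x b"
      using \<open>x \<in> S\<close> by (force simp: X_def)
    then show False
      using assms(2) bounded_cball bounded_subset by blast
  qed
  moreover have "\<not> (\<forall>z\<in>(UNIV :: real set). z \<le> b)" for b
    by (metis UNIV_I gt_ex not_le)
  ultimately have "(\<lambda>b. \<forall>z\<in>X. z \<le> b) = (\<lambda>b. \<forall>z\<in>(UNIV :: real set). z \<le> b)"
    by (intro ext) blast
  then have "Sup X = Sup (UNIV :: real set)"
    unfolding Sup_real_def by (simp only:)
  then show ?thesis
    using assms(1) by (simp add: diameter_def X_def)
qed

(* diameter assigns every nonempty unbounded set the same unspecified value Sup UNIV. *)
definition hd_term_unbounded :: "real \<Rightarrow> real" where
  "hd_term_unbounded t = (if t = 0 then 1 else Sup (UNIV :: real set) powr t)"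

lemma hd_term_if_unbounded: "U \<noteq> {} \<Longrightarrow> \<not> bounded U \<Longrightarrow> hd_term t U = ennreal (hd_term_unbounded t)"
  by (simp add: hd_term_def hd_term_unbounded_def diameter_unbounded)

lemma hd_term_antimono_exponent:
  assumes "0 \<le> t" "t \<le> s" "bounded U" "diameter U \<le> 1"
  shows "hd_term s U \<le> hd_term t U"
proof -
  have "0 \<le> diameter U" using assms(3) by (rule diameter_ge_0)
  then show ?thesis
    using assms powr_le1[of s "diameter U"] powr_mono'[of t s "diameter U"]
    by (auto simp: hd_term_def ennreal_leI)
qed

lemma hausdorff_pre_le_finite_cover:
  fixes U :: "'b \<Rightarrow> 'a::metric_space set"
  assumes "finite F" "A \<subseteq> (\<Union>j\<in>F. U j)"
    and "\<And>j. j \<in> F \<Longrightarrow> bounded (U j)" "\<And>j. j \<in> F \<Longrightarrow> diameter (U j) \<le> r"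
    and "0 \<le> r" "r \<le> \<delta>" "0 < t"
  shows "hausdorff_pre t \<delta> A \<le> ennreal (card F * r powr t)"
proof -
  obtain f where f: "bij_betw f {..<card F} F"
    using ex_bij_betw_nat_finite[OF assms(1)] by (auto simp: atLeast0LessThan)
  define V where "V n = (if n < card F then U (f n) else {})" for n
  have "A \<subseteq> (\<Union>n. V n)"
    using assms(2) bij_betw_imp_surj_on[OF f] by (force simp: V_def)
  moreover have "diameter (V n) \<le> \<delta>" for n
    using assms(4-6) bij_betw_apply[OF f] by (force simp: V_def)
  ultimately have "hausdorff_pre t \<delta> A \<le> (\<Sum>n. hd_term t (V n))"
    by (rule hausdorff_pre_le_sum)
  also have "\<dots> = (\<Sum>n<card F. hd_term t (U (f n)))"
    by (subst suminf_finite[of "{..<card F}"]) (auto simp: V_def hd_term_def)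
  also have "\<dots> = (\<Sum>j\<in>F. hd_term t (U j))"
    using f by (rule sum.reindex_bij_betw)
  also have "\<dots> \<le> (\<Sum>j\<in>F. ennreal (r powr t))"
  proof (rule sum_mono)
    fix j assume "j \<in> F"
    then have "0 \<le> diameter (U j)" "diameter (U j) \<le> r"
      using assms(3,4) diameter_ge_0 by auto
    then show "hd_term t (U j) \<le> ennreal (r powr t)"
      using assms(7) by (auto simp: hd_term_def intro!: ennreal_leI powr_mono2)
  qed
  also have "\<dots> = ennreal (card F * r powr t)"
    by (simp add: ennreal_of_nat_eq_real_of_nat ennreal_mult)
  finally show ?thesis .
qed

lemma hausdorff_pre_cantor_strip_ge:
  fixes i :: "'n::finite"
  assumes "0 \<le> t" "t \<le> cantor_exponent CARD('n)" "\<delta> < 1"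
  shows "ennreal (min (1 / 2^(CARD('n) + k)) (hd_term_unbounded t)) \<le> hausdorff_pre t \<delta> (cantor_strip k i)"
  unfolding hausdorff_pre_def
proof (rule INF_greatest, clarify)
  fix U :: "nat \<Rightarrow> (real^'n) set"
  assume cover: "cantor_strip k i \<subseteq> (\<Union>j. U j)" and small: "\<forall>j. diameter (U j) \<le> \<delta>"
  have "diameter (U j) \<le> 1" for j
    using small assms(3) by (meson less_imp_le order_trans)
  show "ennreal (min (1 / 2^(CARD('n) + k)) (hd_term_unbounded t)) \<le> (\<Sum>j. hd_term t (U j))"
  proof (cases "\<forall>j. bounded (U j)")
    case True
    have "ennreal (min (1 / 2^(CARD('n) + k)) (hd_term_unbounded t)) \<le> ennreal (1 / 2^(CARD('n) + k))"
      by (simp add: ennreal_leI)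
    also have "\<dots> \<le> (\<Sum>j. hd_term (cantor_exponent CARD('n)) (U j))"
      using cover True small assms(3) by (intro sum_hd_term_cover_cantor_strip_ge) (auto intro: le_less_trans)
    also have "\<dots> \<le> (\<Sum>j. hd_term t (U j))"
      using True \<open>\<And>j. diameter (U j) \<le> 1\<close> assms
      by (intro suminf_le hd_term_antimono_exponent) auto
    finally show ?thesis .
  next
    case False
    then obtain j where "\<not> bounded (U j)" by blast
    then have "U j \<noteq> {}" by auto
    have "ennreal (min (1 / 2^(CARD('n) + k)) (hd_term_unbounded t)) \<le> hd_term t (U j)"
      using hd_term_if_unbounded[OF \<open>U j \<noteq> {}\<close> \<open>\<not> bounded (U j)\<close>] by (simp add: ennreal_leI)
    also have "\<dots> \<le> (\<Sum>j. hd_term t (U j))"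
      using sum_le_suminf[of "\<lambda>j. hd_term t (U j)" "{j}"] by simp
    finally show ?thesis .
  qed
qed

definition cantor_cube :: "nat \<Rightarrow> ('n::finite \<Rightarrow> nat) \<Rightarrow> (real^'n) set" where
  "cantor_cube N w = cbox (grid_point N w) (\<chi> i. (real (w i) + 1) / 3^N)"

lemma diameter_cantor_cube: "diameter (cantor_cube N w :: (real^'n::finite) set) \<le> CARD('n) / 3^N"
proof (rule diameter_le)
  fix x y assume xy: "x \<in> cantor_cube N w" "y \<in> cantor_cube N w"
  have "\<bar>(x - y) $ i\<bar> \<le> 1 / 3^N" for i
    using xy by (auto simp: cantor_cube_def grid_point_def mem_box_cart add_divide_distrib abs_le_iff
        dest!: spec[of _ i])
  then have "norm (x - y) \<le> (\<Sum>i\<in>(UNIV::'n set). 1 / 3^N)"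
    using norm_le_l1_cart[of "x - y"] sum_mono by (metis (no_types, lifting) order_trans)
  then show "norm (x - y) \<le> CARD('n) / 3^N"
    by simp
qed simp

lemma cantor_power_subset_cubes: "cantor_power \<subseteq> (\<Union>w\<in>cantor_grid N. cantor_cube N w)"
proof
  fix x :: "real^'n" assume "x \<in> cantor_power"
  then have "\<forall>i. \<exists>m. m \<in> cantor_index N \<and> x $ i \<in> cantor_interval N m"
    using cantor_set_mem_interval by (fastforce simp: cantor_power_def)
  then obtain w where "\<And>i. w i \<in> cantor_index N \<and> x $ i \<in> cantor_interval N (w i)"
    by metis
  then have "w \<in> cantor_grid N" "x \<in> cantor_cube N w"
    by (auto simp: mem_cantor_grid cantor_cube_def grid_point_def mem_box_cart cantor_interval_def)
  then show "x \<in> (\<Union>w\<in>cantor_grid N. cantor_cube N w)"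
    by blast
qed

lemma hausdorff_pre_cantor_power_le:
  assumes "cantor_exponent CARD('n) \<le> t" "CARD('n) / 3^N \<le> \<delta>"
  shows "hausdorff_pre t \<delta> (cantor_power :: (real^'n::finite) set)
    \<le> ennreal (CARD('n) powr cantor_exponent CARD('n) * (CARD('n) / 3^N) powr (t - cantor_exponent CARD('n)))"
proof -
  let ?d = "real CARD('n)" and ?s = "cantor_exponent CARD('n)"
  have "0 < t"
    using cantor_exponent_pos[of "CARD('n)"] assms(1) by simp
  then have "hausdorff_pre t \<delta> (cantor_power :: (real^'n) set)
      \<le> ennreal (card (cantor_grid N :: ('n \<Rightarrow> nat) set) * (?d / 3^N) powr t)"
    using assms(2) diameter_cantor_cube
    by (intro hausdorff_pre_le_finite_cover[OF finite_cantor_grid cantor_power_subset_cubes])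
      (auto simp: cantor_cube_def)
  also have "card (cantor_grid N :: ('n \<Rightarrow> nat) set) * (?d / 3^N) powr t
      = ?d powr ?s * (?d / 3^N) powr (t - ?s)"
  proof -
    have "(?d / 3^N) powr ?s = ?d powr ?s * (1 / 3^N) powr ?s"
      by (simp add: powr_mult[symmetric])
    also have "\<dots> = ?d powr ?s / 2^(CARD('n) * N)"
      by (simp add: inverse_pow3_powr_cantor_exponent)
    finally have s_part: "(?d / 3^N) powr ?s = ?d powr ?s / 2^(CARD('n) * N)" .
    have "card (cantor_grid N :: ('n \<Rightarrow> nat) set) * (?d / 3^N) powr t
        = 2^(CARD('n) * N) * ((?d / 3^N) powr ?s * (?d / 3^N) powr (t - ?s))"
      by (simp add: card_cantor_grid powr_add[symmetric])
    also have "\<dots> = ?d powr ?s * (?d / 3^N) powr (t - ?s)"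
      by (simp add: s_part)
    finally show ?thesis .
  qed
  finally show ?thesis .
qed

lemma eventually_div_pow3_le:
  assumes "0 < \<delta>"
  shows "eventually (\<lambda>N. c / 3^N \<le> (\<delta>::real)) sequentially"
proof -
  have "(\<lambda>N. c / 3^N) \<longlonglongrightarrow> (0::real)"
    by (rule LIMSEQ_divide_realpow_zero) simp
  from order_tendstoD(2)[OF this assms] show ?thesis
    by (rule eventually_mono) simp
qed

lemma hausdorff_measure_cantor_power_le:
  "hausdorff_measure (cantor_exponent CARD('n)) (cantor_power :: (real^'n::finite) set)
    \<le> ennreal (CARD('n) powr cantor_exponent CARD('n))"
  unfolding hausdorff_measure_def
proof (rule SUP_least)
  fix \<delta> :: real assume "\<delta> \<in> {0<..}"
  then obtain N where "CARD('n) / 3^N \<le> \<delta>"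
    using eventually_div_pow3_le[of \<delta> "CARD('n)"] by (auto simp: eventually_sequentially)
  from hausdorff_pre_cantor_power_le[OF order_refl this]
  show "hausdorff_pre (cantor_exponent CARD('n)) \<delta> (cantor_power :: (real^'n) set)
    \<le> ennreal (CARD('n) powr cantor_exponent CARD('n))"
    by simp
qed

lemma hausdorff_measure_cantor_power_eq_0:
  assumes "cantor_exponent CARD('n) < t"
  shows "hausdorff_measure t (cantor_power :: (real^'n::finite) set) = 0"
proof -
  let ?d = "real CARD('n)" and ?s = "cantor_exponent CARD('n)"
  have "(\<lambda>N. ?d / 3^N) \<longlonglongrightarrow> 0"
    by (rule LIMSEQ_divide_realpow_zero) simp
  then have "(\<lambda>N. (?d / 3^N) powr (t - ?s)) \<longlonglongrightarrow> 0"
    by (rule tendsto_zero_powrI) (use assms in auto)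
  then have lim: "(\<lambda>N. ennreal (?d powr ?s * (?d / 3^N) powr (t - ?s))) \<longlonglongrightarrow> 0"
    using tendsto_ennrealI[OF tendsto_mult_right_zero] by auto
  have "hausdorff_pre t \<delta> (cantor_power :: (real^'n) set) \<le> 0" if "0 < \<delta>" for \<delta>
  proof (rule tendsto_lowerbound[OF lim])
    show "eventually (\<lambda>N. hausdorff_pre t \<delta> (cantor_power :: (real^'n) set)
        \<le> ennreal (?d powr ?s * (?d / 3^N) powr (t - ?s))) sequentially"
      using eventually_div_pow3_le[OF that, of ?d] less_imp_le[OF assms]
      by (auto elim!: eventually_mono intro: hausdorff_pre_cantor_power_le)
  qed simp
  then show ?thesis
    unfolding hausdorff_measure_def by (simp add: SUP_least le_zero_eq)
qed

lemma hd_term_unbounded_pos: "Sup (UNIV :: real set) \<noteq> 0 \<Longrightarrow> 0 < hd_term_unbounded t"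
  by (simp add: hd_term_unbounded_def)

lemma hausdorff_measure_cantor_strip_ge:
  fixes i :: "'n::finite"
  assumes "0 \<le> t" "t \<le> cantor_exponent CARD('n)"
  shows "ennreal (min (1 / 2^CARD('n)) (hd_term_unbounded t) / 2^k) \<le> hausdorff_measure t (cantor_strip k i)"
proof -
  let ?C = "min (1 / 2^CARD('n)) (hd_term_unbounded t)"
  have "0 \<le> ?C"
    by (simp add: hd_term_unbounded_def)
  then have "?C / 2^k \<le> ?C / 1"
    by (intro divide_left_mono) auto
  moreover have "?C / 2^k \<le> 1 / 2^CARD('n) / 2^k"
    by (intro divide_right_mono) auto
  ultimately have "?C / 2^k \<le> min (1 / 2^(CARD('n) + k)) (hd_term_unbounded t)"
    by (simp add: power_add)
  then have "ennreal (?C / 2^k) \<le> ennreal (min (1 / 2^(CARD('n) + k)) (hd_term_unbounded t))"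
    by (rule ennreal_leI)
  also have "\<dots> \<le> hausdorff_pre t (1/2) (cantor_strip k i)"
    using assms by (rule hausdorff_pre_cantor_strip_ge) simp
  also have "\<dots> \<le> hausdorff_measure t (cantor_strip k i)"
    by (rule hausdorff_pre_le_hausdorff_measure) simp
  finally show ?thesis .
qed

lemma hausdorff_measure_cantor_power_ne_0:
  assumes "Sup (UNIV :: real set) \<noteq> 0" "0 \<le> t" "t \<le> cantor_exponent CARD('n)"
  shows "hausdorff_measure t (cantor_power :: (real^'n::finite) set) \<noteq> 0"
  using hausdorff_measure_cantor_strip_ge[OF assms(2,3), of 0 undefined] hd_term_unbounded_pos[OF assms(1), of t]
  by (auto simp: cantor_strip_0 min_def split: if_splits)

lemma one_le_hausdorff_measure_0:
  fixes A :: "'a::metric_space set"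
  assumes "A \<noteq> {}"
  shows "1 \<le> hausdorff_measure 0 A"
proof -
  have "1 \<le> hausdorff_pre 0 1 A"
    unfolding hausdorff_pre_def
  proof (rule INF_greatest, clarify)
    fix U :: "nat \<Rightarrow> 'a set" assume "A \<subseteq> (\<Union>j. U j)"
    then obtain j where "U j \<noteq> {}" using assms by blast
    then have "hd_term 0 (U j) = 1" by (simp add: hd_term_def)
    then show "1 \<le> (\<Sum>j. hd_term 0 (U j))"
      using sum_le_suminf[of "\<lambda>j. hd_term 0 (U j)" "{j}"] by simp
  qed
  also have "\<dots> \<le> hausdorff_measure 0 A"
    by (rule hausdorff_pre_le_hausdorff_measure) simp
  finally show ?thesis .
qed

(* If the unspecified diameter Sup UNIV of unbounded sets happens to be 0, the single set
   UNIV is a free cover and all Hausdorff measures degenerate. *)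
lemma hausdorff_measure_if_Sup_UNIV_eq_0:
  fixes A :: "'a::{real_normed_vector, perfect_space} set"
  assumes "Sup (UNIV :: real set) = 0" "A \<noteq> {}"
  shows "hausdorff_measure t A = (if t = 0 then 1 else 0)"
proof -
  have "diameter (UNIV :: 'a set) = 0"
    using diameter_unbounded[of "UNIV :: 'a set"] assms(1) by simp
  have "hausdorff_pre t \<delta> A \<le> (if t = 0 then 1 else 0)" if "0 < \<delta>" for \<delta>
  proof -
    define U where "U j = (if j = 0 then UNIV else {} :: 'a set)" for j :: nat
    have "hausdorff_pre t \<delta> A \<le> (\<Sum>j. hd_term t (U j))"
      using \<open>diameter (UNIV :: 'a set) = 0\<close> that by (intro hausdorff_pre_le_sum) (auto simp: U_def)
    also have "(\<Sum>j. hd_term t (U j)) = (\<Sum>j\<in>{0}. hd_term t (U j))"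
      by (rule suminf_finite) (auto simp: U_def hd_term_def)
    also have "\<dots> = (if t = 0 then 1 else 0)"
      using \<open>diameter (UNIV :: 'a set) = 0\<close> by (simp add: U_def hd_term_def)
    finally show ?thesis .
  qed
  then have "hausdorff_measure t A \<le> (if t = 0 then 1 else 0)"
    unfolding hausdorff_measure_def by (intro SUP_least) auto
  with one_le_hausdorff_measure_0[OF assms(2)] show ?thesis
    by (auto split: if_splits)
qed

lemma hausdorff_dim_cantor_power:
  "hausdorff_dim (cantor_power :: (real^'n::finite) set)
    = (if Sup (UNIV :: real set) = 0 then 0 else cantor_exponent CARD('n))"
proof -
  let ?K = "cantor_power :: (real^'n) set"
  have "?K \<noteq> {}"
    using cantor_strip_0 zero_mem_cantor_strip by blast
  have "{t. 0 \<le> t \<and> hausdorff_measure t ?K = 0}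
      = {(if Sup (UNIV :: real set) = 0 then 0 else cantor_exponent CARD('n))<..}"
  proof (cases "Sup (UNIV :: real set) = 0")
    case True
    then show ?thesis
      using hausdorff_measure_if_Sup_UNIV_eq_0[OF True \<open>?K \<noteq> {}\<close>] by auto
  next
    case False
    have "0 \<le> t \<and> hausdorff_measure t ?K = 0 \<longleftrightarrow> cantor_exponent CARD('n) < t" for t
      using hausdorff_measure_cantor_power_ne_0[OF False, of t, where 'n='n]
        hausdorff_measure_cantor_power_eq_0[of t, where 'n='n] cantor_exponent_pos[of "CARD('n)"]
      by (cases "t \<le> cantor_exponent CARD('n)") auto
    with False show ?thesis
      by auto
  qed
  then show ?thesis
    by (simp add: hausdorff_dim_def)
qed

lemma hausdorff_measure_cantor_power_finite:
  "hausdorff_measure (hausdorff_dim (cantor_power :: (real^'n::finite) set)) (cantor_power :: (real^'n) set)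
    < top"
proof (cases "Sup (UNIV :: real set) = 0")
  case True
  have "(cantor_power :: (real^'n) set) \<noteq> {}"
    using cantor_strip_0 zero_mem_cantor_strip by blast
  with True show ?thesis
    by (simp add: hausdorff_dim_cantor_power hausdorff_measure_if_Sup_UNIV_eq_0)
next
  case False
  then show ?thesis
    using hausdorff_measure_cantor_power_le[where 'n='n]
    by (simp add: hausdorff_dim_cantor_power le_less_trans)
qed

lemma hausdorff_dim_measure_cantor_strip_ge:
  fixes i :: "'n::finite"
  obtains C where "0 < C"
    "\<And>k. ennreal (C / 2^k) \<le> hausdorff_measure (hausdorff_dim (cantor_power :: (real^'n) set)) (cantor_strip k i)"
proof (cases "Sup (UNIV :: real set) = 0")
  case True
  have "ennreal (1 / 2^k) \<le> hausdorff_measure (hausdorff_dim (cantor_power :: (real^'n) set)) (cantor_strip k i)"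
    for k
  proof -
    have "cantor_strip k i \<noteq> {}"
      using zero_mem_cantor_strip by blast
    with True show ?thesis
      by (simp add: hausdorff_dim_cantor_power hausdorff_measure_if_Sup_UNIV_eq_0)
  qed
  then show ?thesis
    by (rule that[of 1, OF zero_less_one])
next
  case False
  let ?s = "cantor_exponent CARD('n)"
  have "0 < min (1 / 2^CARD('n)) (hd_term_unbounded ?s)"
    using hd_term_unbounded_pos[OF False] by simp
  moreover have "ennreal (min (1 / 2^CARD('n)) (hd_term_unbounded ?s) / 2^k)
      \<le> hausdorff_measure (hausdorff_dim (cantor_power :: (real^'n) set)) (cantor_strip k i)" for k
    using False cantor_exponent_pos[of "CARD('n)"]
    by (simp add: hausdorff_dim_cantor_power hausdorff_measure_cantor_strip_ge)
  ultimately show ?thesis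
    by (rule that)
qed

section \<open>Neighbourhoods of a coordinate hyperplane\<close>

lemma coordinate_hyperplane_mem_affine_hyperplanes: "{x :: real^'n::finite. x $ i = 0} \<in> affine_hyperplanes"
  unfolding affine_hyperplanes_def
  by (intro CollectI exI[of _ "axis i 1"] exI[of _ 0]) (simp add: inner_axis')

lemma cantor_strip_subset_open_nbhd:
  fixes i :: "'n::finite"
  assumes "1 / 3^k < \<epsilon>"
  shows "cantor_strip k i \<subseteq> open_nbhd {x. x $ i = 0} \<epsilon>"
proof
  fix x assume "x \<in> cantor_strip k i"
  then have "0 \<le> x $ i" "x $ i < \<epsilon>"
    using cantor_set_subset_01 assms by (auto simp: cantor_strip_def cantor_power_def)
  moreover have "x - (x $ i) *\<^sub>R axis i 1 \<in> {x. x $ i = 0}"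
    by simp
  moreover have "dist x (x - (x $ i) *\<^sub>R axis i 1) = \<bar>x $ i\<bar>"
    by (simp add: dist_norm)
  ultimately show "x \<in> open_nbhd {x. x $ i = 0} \<epsilon>"
    unfolding open_nbhd_def by (intro CollectI bexI[of _ "x - (x $ i) *\<^sub>R axis i 1"]) auto
qed

lemma ln_div_ln_le_if_powr_le:
  fixes C \<epsilon> S a :: real
  assumes "0 < C" "0 < \<epsilon>" "\<epsilon> < 1" "C * \<epsilon> powr a \<le> S"
  shows "ln S / ln \<epsilon> \<le> ln C / ln \<epsilon> + a"
proof -
  have "0 < C * \<epsilon> powr a"
    using assms(1,2) by simp
  have "ln C + a * ln \<epsilon> = ln (C * \<epsilon> powr a)"
    using assms(1,2) by (simp add: ln_mult)
  also have "\<dots> \<le> ln S"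
    using assms(4) \<open>0 < C * \<epsilon> powr a\<close> by (metis ln_le_cancel_iff order_less_le_trans)
  finally have "ln C + a * ln \<epsilon> \<le> ln S" .
  moreover have "ln \<epsilon> < 0"
    using assms(2,3) by simp
  ultimately have "ln S / ln \<epsilon> \<le> (ln C + a * ln \<epsilon>) / ln \<epsilon>"
    by (intro divide_right_mono_neg) auto
  also have "\<dots> = ln C / ln \<epsilon> + a"
    using \<open>ln \<epsilon> < 0\<close> by (simp add: field_simps)
  finally show ?thesis .
qed

lemma alpha1_le_if_nbhd_lower_bound:
  fixes \<mu> :: "(real^'n::finite) set \<Rightarrow> real"
  assumes "0 < C" and bounded: "\<And>A. \<mu> A \<le> B"
    and lower: "\<And>\<epsilon>. 0 < \<epsilon> \<Longrightarrow> \<epsilon> < 1 \<Longrightarrow> \<exists>L\<in>affine_hyperplanes. C * \<epsilon> powr a \<le> \<mu> (open_nbhd L \<epsilon>)"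
  shows "alpha1 \<mu> \<le> ereal a"
proof -
  define f where "f \<epsilon> = ereal (ln (Sup ((\<lambda>L. \<mu> (open_nbhd L \<epsilon>)) ` affine_hyperplanes)) / ln \<epsilon>)" for \<epsilon>
  define g where "g \<epsilon> = ereal (ln C / ln \<epsilon> + a)" for \<epsilon>
  have "eventually (\<lambda>\<epsilon>. f \<epsilon> \<le> g \<epsilon>) (at_right 0)"
  proof (rule eventually_at_rightI[of 0 1])
    fix \<epsilon> :: real assume "\<epsilon> \<in> {0<..<1}"
    then obtain L where L: "L \<in> affine_hyperplanes" "C * \<epsilon> powr a \<le> \<mu> (open_nbhd L \<epsilon>)"
      using lower by auto
    have "\<mu> (open_nbhd L \<epsilon>) \<le> Sup ((\<lambda>L. \<mu> (open_nbhd L \<epsilon>)) ` affine_hyperplanes)"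
      using L(1) bounded by (intro cSup_upper bdd_aboveI[of _ B]) auto
    with L(2) \<open>0 < C\<close> \<open>\<epsilon> \<in> {0<..<1}\<close> show "f \<epsilon> \<le> g \<epsilon>"
      unfolding f_def g_def by (simp add: ln_div_ln_le_if_powr_le)
  qed simp
  moreover have "(g \<longlongrightarrow> ereal a) (at_right 0)"
  proof -
    have "filterlim ln at_infinity (at_right (0::real))"
      using filterlim_mono[OF ln_at_0 at_bot_le_at_infinity order_refl] .
    then have "((\<lambda>\<epsilon>. ln C / ln \<epsilon> + a) \<longlongrightarrow> 0 + a) (at_right (0::real))"
      by (intro tendsto_add tendsto_divide_0[OF tendsto_const] tendsto_const)
    then show ?thesis
      unfolding g_def by (simp add: lim_ereal)
  qed
  ultimately have "Liminf (at_right 0) f \<le> ereal a"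
    using Liminf_mono lim_imp_Liminf[of "at_right (0::real)" g] by fastforce
  then show ?thesis
    by (simp add: alpha1_def f_def[abs_def])
qed

lemma alpha1_le_if_cantor_strip_lower_bound:
  fixes \<mu> :: "(real^'n::finite) set \<Rightarrow> real" and i :: 'n
  assumes "0 < C" and mono: "\<And>A B. A \<subseteq> B \<Longrightarrow> \<mu> A \<le> \<mu> B"
    and strip: "\<And>k. C / 2^k \<le> \<mu> (cantor_strip k i)"
  shows "alpha1 \<mu> \<le> ereal (ln 2 / ln 3)"
proof (rule alpha1_le_if_nbhd_lower_bound)
  show "0 < C / 4" using \<open>0 < C\<close> by simp
  show "\<mu> A \<le> \<mu> UNIV" for A by (rule mono) simp
  fix \<epsilon> :: real assume "0 < \<epsilon>" "\<epsilon> < 1"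
  then obtain m where m: "1 / 3^Suc m \<le> \<epsilon>" "\<epsilon> < 1 / 3^m"
    using exists_pow3_bracket by blast
  have "C / 4 * \<epsilon> powr (ln 2 / ln 3) \<le> C / 4 * (1 / 3^m) powr (ln 2 / ln 3)"
    using \<open>0 < C\<close> \<open>0 < \<epsilon>\<close> m(2) by (intro mult_left_mono powr_mono2) auto
  also have "(1 / 3^m) powr (ln 2 / ln 3) = (1 / 2^m :: real)"
    using inverse_pow3_powr_cantor_exponent[of m 1] by (simp add: cantor_exponent_def)
  also have "C / 4 * (1 / 2^m) = C / 2^(m + 2)"
    by (simp add: power_add)
  also have "\<dots> \<le> \<mu> (cantor_strip (m + 2) i)"
    by (rule strip)
  also have "\<dots> \<le> \<mu> (open_nbhd {x. x $ i = 0} \<epsilon>)"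
  proof (intro mono cantor_strip_subset_open_nbhd)
    have "1 / 3^(m + 2) < (1 / 3^Suc m :: real)"
      by (intro divide_strict_left_mono power_strict_increasing) auto
    with m(1) show "1 / 3^(m + 2) < \<epsilon>" by linarith
  qed
  finally show "\<exists>L\<in>affine_hyperplanes. C / 4 * \<epsilon> powr (ln 2 / ln 3) \<le> \<mu> (open_nbhd L \<epsilon>)"
    using coordinate_hyperplane_mem_affine_hyperplanes by blast
qed

theorem mainTheorem7:
  fixes s :: real and \<mu> :: "(real ^ 'n) set \<Rightarrow> real"
  assumes "s = hausdorff_dim (cantor_power :: (real ^ 'n) set)"
    and "\<And>A. \<mu> A = enn2real (hausdorff_measure s (A \<inter> cantor_power))"
  shows "alpha1 \<mu> \<le> ereal (ln 2 / ln 3)"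
proof -
  let ?K = "cantor_power :: (real ^ 'n) set"
  obtain i :: 'n where True by simp
  obtain C where "0 < C" and strip: "\<And>k. ennreal (C / 2^k) \<le> hausdorff_measure s (cantor_strip k i)"
    using hausdorff_dim_measure_cantor_strip_ge[of i, folded assms(1)] by blast
  have finite: "hausdorff_measure s (A \<inter> ?K) < top" for A
    using hausdorff_measure_cantor_power_finite[where 'n='n, folded assms(1)]
      hausdorff_measure_mono[of "A \<inter> ?K" ?K s] by (simp add: le_less_trans)
  have "\<mu> A \<le> \<mu> B" if "A \<subseteq> B" for A B
    unfolding assms(2) using that finite by (intro enn2real_mono hausdorff_measure_mono) auto
  moreover have "C / 2^k \<le> \<mu> (cantor_strip k i)" for k
    using enn2real_mono[OF strip[of k]] finite[of "cantor_strip k i"] \<open>0 < C\<close>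
    by (simp add: assms(2) Int_absorb2[OF cantor_strip_subset])
  ultimately show ?thesis
    using \<open>0 < C\<close> alpha1_le_if_cantor_strip_lower_bound by blast
qed

end
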